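(* Let $X$ be a Banach space which is a subspace of $\mathrm{Hol}(\mathbb{D})$ with continuous inclusion, such that: (i) $e_0\in X$; (ii) if $f,f_1\in\mathrm{Hol}(\mathbb{D})$ with $f=e_1f_1$, then $f\in X$ if and only if $f_1\in X$; (iii) if $f\in X$ then $z\mapsto f(\beta'z)$ belongs to $X$ for all $\beta'\in\mathbb{T}$. Let $m\in\mathrm{Hol}(\mathbb{D})$ with $mf\in X$ for all $f\in X$, let $\beta\in\mathbb{C}$ with $|\beta|=1$ and $\beta^n\neq1$ for all $n\in\mathbb{N}$, and let $T_X\in\mathcal{L}(X)$ be given by $(T_Xf)(z)=m(z)f(\beta z)$. Then (a) $m(0)\mathbb{T}\subset\sigma(T_X)$; (b) if $\lambda\in\sigma(T_X)$ then $\lambda\mathbb{T}\subset\sigma(T_X)$.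
   Context: $\mathbb{D}$ is the open unit disc, $\mathbb{T}$ the unit circle, $\mathrm{Hol}(\mathbb{D})$ the Fréchet space of holomorphic functions on $\mathbb{D}$ (topology of uniform convergence on compacta), $e_k(z)=z^k$. $\sigma(T_X)$ is the spectrum of the bounded operator $T_X$ on $X$; $c\mathbb{T}=\{c\mu:\mu\in\mathbb{T}\}$. *)

theory Defs
  imports "HOL-Analysis.Analysis"
begin

text \<open>Elements of Hol(D) are represented by their canonical representatives:
  functions holomorphic on the unit disc and equal to 0 outside it.\<close>
definition Hol_D :: "(complex \<Rightarrow> complex) set" where
  "Hol_D = {f. f holomorphic_on ball 0 1 \<and> (\<forall>z. z \<notin> ball 0 1 \<longrightarrow> f z = 0)}"

definition e0 :: "complex \<Rightarrow> complex" where
  "e0 = (\<lambda>z. if z \<in> ball 0 1 then 1 else 0)"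

definition banach_subspace_Hol :: "(complex \<Rightarrow> complex) set \<Rightarrow> ((complex \<Rightarrow> complex) \<Rightarrow> real) \<Rightarrow> bool" where
  "banach_subspace_Hol X N \<longleftrightarrow>
     X \<subseteq> Hol_D \<and>
     (\<lambda>z. 0) \<in> X \<and>
     (\<forall>f\<in>X. \<forall>g\<in>X. (\<lambda>z. f z + g z) \<in> X) \<and>
     (\<forall>f\<in>X. \<forall>c::complex. (\<lambda>z. c * f z) \<in> X) \<and>
     (\<forall>f\<in>X. N f \<ge> 0) \<and>
     (\<forall>f\<in>X. N f = 0 \<longleftrightarrow> f = (\<lambda>z. 0)) \<and>
     (\<forall>f\<in>X. \<forall>c::complex. N (\<lambda>z. c * f z) = cmod c * N f) \<and>
     (\<forall>f\<in>X. \<forall>g\<in>X. N (\<lambda>z. f z + g z) \<le> N f + N g) \<and>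
     (\<forall>s::nat \<Rightarrow> complex \<Rightarrow> complex. (\<forall>n. s n \<in> X) \<longrightarrow>
        (\<forall>e>0. \<exists>M. \<forall>p\<ge>M. \<forall>q\<ge>M. N (\<lambda>z. s p z - s q z) < e) \<longrightarrow>
        (\<exists>g\<in>X. (\<lambda>n. N (\<lambda>z. s n z - g z)) \<longlonglongrightarrow> 0)) \<and>
     (\<forall>K. compact K \<and> K \<subseteq> ball 0 1 \<longrightarrow>
        (\<exists>C. \<forall>f\<in>X. \<forall>z\<in>K. cmod (f z) \<le> C * N f))"

definition bounded_op :: "(complex \<Rightarrow> complex) set \<Rightarrow> ((complex \<Rightarrow> complex) \<Rightarrow> real)
     \<Rightarrow> ((complex \<Rightarrow> complex) \<Rightarrow> (complex \<Rightarrow> complex)) \<Rightarrow> bool" where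
  "bounded_op X N T \<longleftrightarrow>
     (\<forall>f\<in>X. T f \<in> X) \<and>
     (\<forall>f\<in>X. \<forall>g\<in>X. T (\<lambda>z. f z + g z) = (\<lambda>z. T f z + T g z)) \<and>
     (\<forall>f\<in>X. \<forall>c::complex. T (\<lambda>z. c * f z) = (\<lambda>z. c * T f z)) \<and>
     (\<exists>C. \<forall>f\<in>X. N (T f) \<le> C * N f)"

definition op_spectrum :: "(complex \<Rightarrow> complex) set \<Rightarrow> ((complex \<Rightarrow> complex) \<Rightarrow> real)
     \<Rightarrow> ((complex \<Rightarrow> complex) \<Rightarrow> (complex \<Rightarrow> complex)) \<Rightarrow> complex set" where
  "op_spectrum X N T = {l. \<not> (\<exists>S. bounded_op X N S \<and>
      (\<forall>f\<in>X. S (\<lambda>z. l * f z - T f z) = f) \<and>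
      (\<forall>f\<in>X. (\<lambda>z. l * S f z - T (S f) z) = f))}"

end

(*
  Write A l = l I - T. Because (T (z f))(z) = m(z) (beta z) f(beta z), one has
  A (beta l) (z f) = beta z (A l f). If beta l lies in the resolvent set and beta l ~= m(0),
  this makes A l injective, and for g in X the solution y of A (beta l) y = beta z g satisfies
  (beta l - m(0)) y(0) = 0, so y = z h with h in X by (ii) and A l h = g; by the inverse
  mapping theorem l then lies in the resolvent set. Every A (m(0)) f vanishes at 0, so e0 is
  not in the range of A (m(0)) and m(0) is in the spectrum; hence the spectrum is invariant
  under multiplication by beta. It is closed, and the powers of beta are dense in the unit
  circle because beta is not a root of unity, so the spectrum is invariant under all
  rotations, which is (b); (a) is (b) for l = m(0).
*)

theory Submission
  imports Defs "HOL-Complex_Analysis.Complex_Analysis"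
begin

section \<open>Irrational rotations\<close>

lemma unit_complex_eq_cis:
  assumes "cmod z = 1"
  obtains t where "z = cis (2 * pi * t)"
proof
  show "z = cis (2 * pi * (Arg z / (2 * pi)))"
    using assms rcis_cmod_Arg[of z] by (simp add: cis_rcis_eq)
qed

lemma irrational_rotation_orbit_dense:
  fixes \<beta> :: complex
  assumes "cmod \<beta> = 1" and "\<forall>n::nat. n \<ge> 1 \<longrightarrow> \<beta> ^ n \<noteq> 1"
  shows "sphere 0 1 \<subseteq> closure (range (\<lambda>n. \<beta> ^ n))"
proof
  fix \<mu> :: complex assume "\<mu> \<in> sphere 0 1"
  then obtain \<alpha> where \<mu>: "\<mu> = cis (2 * pi * \<alpha>)"
    using unit_complex_eq_cis by (metis dist_0_norm mem_sphere)
  obtain \<theta> where \<beta>: "\<beta> = cis (2 * pi * \<theta>)"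
    using unit_complex_eq_cis assms(1) by metis
  have \<beta>_pow: "\<beta> ^ n = cis (2 * pi * (real n * \<theta>))" for n
    unfolding \<beta> by (simp only: Complex.DeMoivre) (simp add: mult_ac)
  have "\<theta> \<notin> \<rat>"
  proof
    assume "\<theta> \<in> \<rat>"
    then obtain a b where ab: "b > 0" "\<theta> = of_int a / of_int b" by (metis Rats_cases')
    then have "\<beta> ^ nat b = 1" using \<beta>_pow[of "nat b"] by simp
    with ab assms(2) show False by simp
  qed
  show "\<mu> \<in> closure (range (\<lambda>n. \<beta> ^ n))"
    unfolding closure_approachable
  proof (intro allI impI)
    fix \<epsilon> :: real assume "\<epsilon> > 0"
    have "isCont (\<lambda>t. cis (2 * pi * t)) \<alpha>"
      unfolding cis_conv_exp by (intro continuous_intros)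
    then obtain \<delta> where "\<delta> > 0" and \<delta>: "\<And>t. dist t \<alpha> < \<delta> \<Longrightarrow> dist (cis (2 * pi * t)) \<mu> < \<epsilon>"
      using \<open>\<epsilon> > 0\<close> \<mu> unfolding continuous_at_eps_delta by metis
    obtain h k where "k > 0" and hk: "\<bar>of_int k * \<theta> - of_int h - \<alpha>\<bar> < \<delta>"
      using sequence_of_fractional_parts_is_dense[OF \<open>\<theta> \<notin> \<rat>\<close> \<open>\<delta> > 0\<close>] by metis
    have "\<beta> ^ nat k = cis (2 * pi * (of_int k * \<theta> - of_int h))"
      using \<open>k > 0\<close> by (simp add: \<beta>_pow right_diff_distrib cis_divide[symmetric])
    then have "dist (\<beta> ^ nat k) \<mu> < \<epsilon>"
      using \<delta> hk by (simp add: dist_real_def)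
    then show "\<exists>x\<in>range (\<lambda>n. \<beta> ^ n). dist x \<mu> < \<epsilon>" by blast
  qed
qed

lemma closed_rotation_invariant:
  fixes \<beta> :: complex and S :: "complex set"
  assumes "closed S" and "cmod \<beta> = 1" and "\<forall>n::nat. n \<ge> 1 \<longrightarrow> \<beta> ^ n \<noteq> 1"
    and "\<And>w. w \<in> S \<Longrightarrow> \<beta> * w \<in> S" and "l \<in> S" and "cmod \<mu> = 1"
  shows "l * \<mu> \<in> S"
proof -
  have "\<beta> ^ n * l \<in> S" for n
    by (induction n) (use assms(4,5) in \<open>auto simp: mult.assoc\<close>)
  then have "(\<lambda>w. w * l) ` range (\<lambda>n. \<beta> ^ n) \<subseteq> S" by auto
  then have "(\<lambda>w. w * l) ` closure (range (\<lambda>n. \<beta> ^ n)) \<subseteq> S"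
    by (intro image_closure_subset continuous_intros \<open>closed S\<close>)
  moreover have "\<mu> \<in> closure (range (\<lambda>n. \<beta> ^ n))"
    using irrational_rotation_orbit_dense[OF assms(2,3)] assms(6) by auto
  ultimately show ?thesis by (auto simp: mult.commute)
qed

section \<open>Multiplication and division by z in Hol(D)\<close>

lemma Hol_D_mult_z: "f \<in> Hol_D \<Longrightarrow> (\<lambda>z. z * f z) \<in> Hol_D"
  unfolding Hol_D_def by (auto intro!: holomorphic_intros)

lemma Hol_D_isCont_0:
  assumes "f \<in> Hol_D"
  shows "isCont f 0"
proof -
  have "continuous_on (ball 0 1) f"
    using assms unfolding Hol_D_def by (auto intro: holomorphic_on_imp_continuous_on)
  then show ?thesis
    by (simp add: continuous_on_interior)
qed

lemma Hol_D_mult_z_cancel: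
  assumes "f \<in> Hol_D" "g \<in> Hol_D" and eq: "\<And>z. z * f z = z * g z"
  shows "f = g"
proof
  have "g w = f w" if "w \<noteq> 0" for w
    using eq[of w] that by simp
  then have "\<forall>\<^sub>F w in at 0. g w = f w"
    unfolding eventually_at_filter by (intro always_eventually) simp
  then have "f \<midarrow>0\<rightarrow> g 0"
    using Hol_D_isCont_0[OF assms(2)] unfolding isCont_def by (rule Lim_transform_eventually[rotated])
  then have "f 0 = g 0"
    using Hol_D_isCont_0[OF assms(1)] unfolding isCont_def by (rule LIM_unique[rotated])
  then show "f z = g z" for z
    using eq[of z] by (cases "z = 0") auto
qed

lemma Hol_D_factor_z:
  assumes "f \<in> Hol_D" "f 0 = 0"
  obtains h where "h \<in> Hol_D" "\<And>z. f z = z * h z"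
proof
  have hol: "f holomorphic_on ball 0 1" and out: "\<And>z. z \<notin> ball 0 1 \<Longrightarrow> f z = 0"
    using assms(1) unfolding Hol_D_def by auto
  define g where "g = (\<lambda>z. if z = 0 then deriv f 0 else (f z - f 0) / (z - 0))"
  have "g holomorphic_on ball 0 1"
    unfolding g_def by (rule pole_lemma[OF hol]) simp
  then have "(\<lambda>z. if z \<in> ball 0 1 then g z else 0) holomorphic_on ball 0 1"
    by (rule holomorphic_transform) simp
  then show "(\<lambda>z. if z \<in> ball 0 1 then g z else 0) \<in> Hol_D"
    unfolding Hol_D_def by simp
  show "f z = z * (if z \<in> ball 0 1 then g z else 0)" for z
    using assms(2) out[of z] by (auto simp: g_def)
qed

section \<open>Bounded operators on a Banach space of functions\<close>

definition lambda_minus_op ::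
    "complex \<Rightarrow> ((complex \<Rightarrow> complex) \<Rightarrow> (complex \<Rightarrow> complex)) \<Rightarrow> (complex \<Rightarrow> complex) \<Rightarrow> (complex \<Rightarrow> complex)"
  where "lambda_minus_op l T f = (\<lambda>z. l * f z - T f z)"

lemma notin_op_spectrum_iff:
  "l \<notin> op_spectrum X N T \<longleftrightarrow> (\<exists>S. bounded_op X N S \<and>
     (\<forall>f\<in>X. S (lambda_minus_op l T f) = f) \<and> (\<forall>f\<in>X. lambda_minus_op l T (S f) = f))"
  by (simp add: op_spectrum_def lambda_minus_op_def)

locale banach_function_space =
  fixes X :: "(complex \<Rightarrow> complex) set" and N :: "(complex \<Rightarrow> complex) \<Rightarrow> real"
  assumes zero_in [simp, intro]: "(\<lambda>z. 0) \<in> X"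
    and add_in [intro]: "f \<in> X \<Longrightarrow> g \<in> X \<Longrightarrow> (\<lambda>z. f z + g z) \<in> X"
    and scale_in [intro]: "f \<in> X \<Longrightarrow> (\<lambda>z. c * f z) \<in> X"
    and N_nonneg [simp]: "f \<in> X \<Longrightarrow> N f \<ge> 0"
    and N_eq_0_iff: "f \<in> X \<Longrightarrow> N f = 0 \<longleftrightarrow> f = (\<lambda>z. 0)"
    and N_scale: "f \<in> X \<Longrightarrow> N (\<lambda>z. c * f z) = cmod c * N f"
    and N_add_le: "f \<in> X \<Longrightarrow> g \<in> X \<Longrightarrow> N (\<lambda>z. f z + g z) \<le> N f + N g"
    and Cauchy_convergent: "(\<And>n. s n \<in> X) \<Longrightarrow>
      \<forall>e>0. \<exists>M. \<forall>p\<ge>M. \<forall>q\<ge>M. N (\<lambda>z. s p z - s q z) < e \<Longrightarrow>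
      \<exists>g\<in>X. (\<lambda>n. N (\<lambda>z. s n z - g z)) \<longlonglongrightarrow> 0"

lemma banach_function_space_if_banach_subspace_Hol:
  "banach_subspace_Hol X N \<Longrightarrow> banach_function_space X N"
  unfolding banach_subspace_Hol_def banach_function_space_def
  by (intro allI impI conjI; elim conjE; blast)

context banach_function_space
begin

lemma minus_in [intro]: "f \<in> X \<Longrightarrow> (\<lambda>z. - f z) \<in> X"
  using scale_in[of f "-1"] by simp

lemma diff_in [intro]: "f \<in> X \<Longrightarrow> g \<in> X \<Longrightarrow> (\<lambda>z. f z - g z) \<in> X"
  using add_in[of f "\<lambda>z. - g z"] by auto

lemma N_zero [simp]: "N (\<lambda>z. 0) = 0"
  using N_eq_0_iff by simp

lemma N_minus: "f \<in> X \<Longrightarrow> N (\<lambda>z. - f z) = N f"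
  using N_scale[of f "-1"] by simp

lemma N_scale_real: "f \<in> X \<Longrightarrow> t \<ge> 0 \<Longrightarrow> N (\<lambda>z. of_real t * f z) = t * N f"
  using N_scale[of f "of_real t"] by simp

lemma N_minus_commute: "f \<in> X \<Longrightarrow> g \<in> X \<Longrightarrow> N (\<lambda>z. f z - g z) = N (\<lambda>z. g z - f z)"
  using N_minus[of "\<lambda>z. g z - f z"] by auto

lemma N_diff_le: "f \<in> X \<Longrightarrow> g \<in> X \<Longrightarrow> N (\<lambda>z. f z - g z) \<le> N f + N g"
  using N_add_le[of f "\<lambda>z. - g z"] N_minus[of g] by auto

lemma N_diff_triangle:
  "f \<in> X \<Longrightarrow> g \<in> X \<Longrightarrow> h \<in> X \<Longrightarrow> N (\<lambda>z. f z - h z) \<le> N (\<lambda>z. f z - g z) + N (\<lambda>z. g z - h z)"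
  using N_add_le[of "\<lambda>z. f z - g z" "\<lambda>z. g z - h z"] by auto

lemma eq_if_N_diff_eq_0: "f \<in> X \<Longrightarrow> g \<in> X \<Longrightarrow> N (\<lambda>z. f z - g z) = 0 \<Longrightarrow> f = g"
  using N_eq_0_iff[of "\<lambda>z. f z - g z"] by (auto simp: fun_eq_iff)

(* The value 0 outside X is junk: Metric_space demands nonnegativity and symmetry on the whole type. *)
definition dist_N :: "(complex \<Rightarrow> complex) \<Rightarrow> (complex \<Rightarrow> complex) \<Rightarrow> real" where
  "dist_N f g = (if f \<in> X \<and> g \<in> X then N (\<lambda>z. f z - g z) else 0)"

lemma dist_N_eq [simp]: "f \<in> X \<Longrightarrow> g \<in> X \<Longrightarrow> dist_N f g = N (\<lambda>z. f z - g z)"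
  by (simp add: dist_N_def)

sublocale M: Metric_space X dist_N
proof
  show "0 \<le> dist_N f g" for f g
    using N_nonneg[OF diff_in] by (auto simp: dist_N_def)
  show "dist_N f g = dist_N g f" for f g
    using N_minus_commute by (auto simp: dist_N_def)
  show "f \<in> X \<Longrightarrow> g \<in> X \<Longrightarrow> dist_N f g = 0 \<longleftrightarrow> f = g" for f g
    using eq_if_N_diff_eq_0 by auto
  show "f \<in> X \<Longrightarrow> g \<in> X \<Longrightarrow> h \<in> X \<Longrightarrow> dist_N f h \<le> dist_N f g + dist_N g h" for f g h
    using N_diff_triangle by simp
qed

lemma mcomplete_dist_N: M.mcomplete
  unfolding M.mcomplete_def
proof (intro allI impI)
  fix s assume "M.MCauchy s"
  then have s: "\<And>n. s n \<in> X" and "\<forall>e>0. \<exists>M. \<forall>p\<ge>M. \<forall>q\<ge>M. dist_N (s p) (s q) < e"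
    unfolding M.MCauchy_def by auto
  then have "\<exists>g\<in>X. (\<lambda>n. N (\<lambda>z. s n z - g z)) \<longlonglongrightarrow> 0"
    by (intro Cauchy_convergent[of s]) simp_all
  then obtain g where "g \<in> X" and g: "(\<lambda>n. N (\<lambda>z. s n z - g z)) \<longlonglongrightarrow> 0" ..
  have "\<forall>\<^sub>F n in sequentially. s n \<in> X \<and> dist_N (s n) g < e" if "e > 0" for e
    using order_tendstoD(2)[OF g that] by eventually_elim (simp add: s \<open>g \<in> X\<close>)
  with \<open>g \<in> X\<close> have "limitin M.mtopology s g sequentially"
    unfolding M.limitin_metric by simp
  then show "\<exists>g. limitin M.mtopology s g sequentially" by blast
qed

lemma geometric_tail_bound:
  assumes s: "\<And>n. s n \<in> X" and q: "0 \<le> q" "q < 1"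
    and step: "\<And>n. N (\<lambda>z. s (Suc n) z - s n z) \<le> K * q ^ n"
    and "n \<le> p"
  shows "N (\<lambda>z. s p z - s n z) \<le> K * q ^ n / (1 - q)"
proof -
  have "K \<ge> 0"
    using step[of 0] N_nonneg[OF diff_in[OF s s]] by (metis mult_1_right power_0 order_trans)
  have "N (\<lambda>z. s p z - s n z) \<le> K * (q ^ n - q ^ p) / (1 - q)"
    using \<open>n \<le> p\<close>
  proof (induction p rule: dec_induct)
    case (step p)
    have "N (\<lambda>z. s (Suc p) z - s n z) \<le> N (\<lambda>z. s (Suc p) z - s p z) + N (\<lambda>z. s p z - s n z)"
      using N_diff_triangle s by blast
    also have "\<dots> \<le> K * q ^ p + K * (q ^ n - q ^ p) / (1 - q)"
      using step.IH assms(4) by (intro add_mono) auto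
    also have "\<dots> = K * (q ^ n - q ^ Suc p) / (1 - q)"
      using q by (simp add: field_simps)
    finally show ?case .
  qed simp
  also have "\<dots> \<le> K * q ^ n / (1 - q)"
    using q \<open>K \<ge> 0\<close> by (auto intro!: divide_right_mono mult_left_mono)
  finally show ?thesis .
qed

lemma geometric_Cauchy_limit:
  assumes s: "\<And>n. s n \<in> X" and q: "0 \<le> q" "q < 1"
    and step: "\<And>n. N (\<lambda>z. s (Suc n) z - s n z) \<le> K * q ^ n"
  obtains g where "g \<in> X" "(\<lambda>n. N (\<lambda>z. s n z - g z)) \<longlonglongrightarrow> 0" "N (\<lambda>z. s 0 z - g z) \<le> K / (1 - q)"
proof -
  note tail = geometric_tail_bound[OF s q step]
  have "(\<lambda>n. K * q ^ n / (1 - q)) \<longlonglongrightarrow> K * 0 / (1 - q)"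
    using q by (intro tendsto_intros LIMSEQ_power_zero) auto
  then have small: "\<forall>\<^sub>F n in sequentially. K * q ^ n / (1 - q) < e" if "e > 0" for e
    using order_tendstoD(2) that by simp
  have "\<forall>e>0. \<exists>M. \<forall>p\<ge>M. \<forall>r\<ge>M. N (\<lambda>z. s p z - s r z) < e"
  proof (intro allI impI)
    fix e :: real assume "e > 0"
    then obtain M where M: "\<And>n. n \<ge> M \<Longrightarrow> K * q ^ n / (1 - q) < e"
      using small unfolding eventually_sequentially by blast
    have close: "N (\<lambda>z. s p z - s r z) < e" if "M \<le> r" "r \<le> p" for p r
      using tail[OF that(2)] M[OF that(1)] by linarith
    have "N (\<lambda>z. s p z - s r z) < e" if "M \<le> p" "M \<le> r" for p r
      using close[of r p] close[of p r] N_minus_commute[OF s[of p] s[of r]] that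
      by (cases "r \<le> p") auto
    then show "\<exists>M. \<forall>p\<ge>M. \<forall>r\<ge>M. N (\<lambda>z. s p z - s r z) < e" by blast
  qed
  then obtain g where g: "g \<in> X" "(\<lambda>n. N (\<lambda>z. s n z - g z)) \<longlonglongrightarrow> 0"
    using Cauchy_convergent[of s] s by blast
  have "N (\<lambda>z. s 0 z - g z) \<le> K / (1 - q) + N (\<lambda>z. s n z - g z)" for n
    using N_diff_triangle[OF s[of 0] s[of n] g(1)] N_minus_commute[OF s[of 0] s[of n]] tail[of 0 n]
    by simp
  then have "N (\<lambda>z. s 0 z - g z) \<le> K / (1 - q) + 0"
    by (intro LIMSEQ_le_const[OF tendsto_add[OF tendsto_const g(2)]]) auto
  with g show thesis using that by simp
qed

definition linear_op :: "((complex \<Rightarrow> complex) \<Rightarrow> (complex \<Rightarrow> complex)) \<Rightarrow> bool" where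
  "linear_op L \<longleftrightarrow> (\<forall>f\<in>X. L f \<in> X) \<and>
     (\<forall>f\<in>X. \<forall>g\<in>X. L (\<lambda>z. f z + g z) = (\<lambda>z. L f z + L g z)) \<and>
     (\<forall>f\<in>X. \<forall>c. L (\<lambda>z. c * f z) = (\<lambda>z. c * L f z))"

lemma bounded_op_iff: "bounded_op X N L \<longleftrightarrow> linear_op L \<and> (\<exists>C. \<forall>f\<in>X. N (L f) \<le> C * N f)"
  unfolding bounded_op_def linear_op_def by blast

lemma
  assumes "linear_op L"
  shows linear_op_in: "f \<in> X \<Longrightarrow> L f \<in> X"
    and linear_op_add: "f \<in> X \<Longrightarrow> g \<in> X \<Longrightarrow> L (\<lambda>z. f z + g z) = (\<lambda>z. L f z + L g z)"
    and linear_op_scale: "f \<in> X \<Longrightarrow> L (\<lambda>z. c * f z) = (\<lambda>z. c * L f z)"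
  using assms unfolding linear_op_def by blast+

lemma linear_op_zero: "linear_op L \<Longrightarrow> L (\<lambda>z. 0) = (\<lambda>z. 0)"
  using linear_op_scale[of L "\<lambda>z. 0" 0] by simp

lemma linear_op_diff: "linear_op L \<Longrightarrow> f \<in> X \<Longrightarrow> g \<in> X \<Longrightarrow> L (\<lambda>z. f z - g z) = (\<lambda>z. L f z - L g z)"
  using linear_op_add[of L f "\<lambda>z. - g z"] linear_op_scale[of L g "-1"] by auto

lemma bounded_op_pos_bound:
  assumes "bounded_op X N L"
  obtains C where "C > 0" "\<And>f. f \<in> X \<Longrightarrow> N (L f) \<le> C * N f"
proof -
  obtain C where C: "\<forall>f\<in>X. N (L f) \<le> C * N f"
    using assms unfolding bounded_op_iff by blast
  have "N (L f) \<le> (\<bar>C\<bar> + 1) * N f" if "f \<in> X" for f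
    using C that N_nonneg[OF that] by (smt (verit) mult_right_mono)
  then show thesis using that[of "\<bar>C\<bar> + 1"] by simp
qed

lemma linear_op_bij_betwI:
  assumes L: "linear_op L"
    and inj: "\<And>h. h \<in> X \<Longrightarrow> L h = (\<lambda>z. 0) \<Longrightarrow> h = (\<lambda>z. 0)"
    and surj: "\<And>g. g \<in> X \<Longrightarrow> \<exists>h\<in>X. L h = g"
  shows "bij_betw L X X"
  unfolding bij_betw_def
proof
  show "inj_on L X"
  proof (rule inj_onI)
    fix f g assume "f \<in> X" "g \<in> X" "L f = L g"
    then have "L (\<lambda>z. f z - g z) = (\<lambda>z. 0)"
      using linear_op_diff[OF L] by simp
    then show "f = g"
      using inj[of "\<lambda>z. f z - g z"] \<open>f \<in> X\<close> \<open>g \<in> X\<close> by (auto simp: fun_eq_iff)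
  qed
  show "L ` X = X"
    using linear_op_in[OF L] surj by blast
qed

lemma sublevel_closure_contains_ball:
  obtains n :: nat and f0 r where "f0 \<in> X" "r > 0"
    "M.mball f0 r \<subseteq> M.mtopology closure_of {f \<in> X. N (L f) \<le> real n}"
proof -
  define A where "A n = M.mtopology closure_of {f \<in> X. N (L f) \<le> real n}" for n
  have "\<Union>(range A) \<subseteq> X"
    using closure_of_subset_topspace[of M.mtopology] by (auto simp: A_def)
  moreover have "X \<subseteq> \<Union>(range A)"
  proof
    fix f assume "f \<in> X"
    obtain n where "N (L f) \<le> real n"
      using real_arch_simple by blast
    then show "f \<in> \<Union>(range A)"
      using closure_of_subset[of "{f \<in> X. N (L f) \<le> real n}" M.mtopology] \<open>f \<in> X\<close>
      by (auto simp: A_def)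
  qed
  ultimately have "M.mtopology interior_of \<Union>(range A) \<noteq> {}"
    using interior_of_topspace[of M.mtopology] zero_in by auto
  moreover have "M.mtopology interior_of \<Union>(range A) = {}"
    if "\<And>n. M.mtopology interior_of A n = {}"
    using that by (intro M.metric_Baire_category_alt[OF mcomplete_dist_N]) (auto simp: A_def)
  ultimately obtain n where "M.mtopology interior_of A n \<noteq> {}"
    by blast
  then show thesis
    using that unfolding A_def M.metric_interior_of by blast
qed

lemma approximate_preimage_in_ball:
  assumes L: "linear_op L" and "f0 \<in> X"
    and ball: "M.mball f0 r \<subseteq> M.mtopology closure_of {f \<in> X. N (L f) \<le> c}"
    and v: "v \<in> X" "N v < r" and "\<epsilon> > 0"
  shows "\<exists>u\<in>X. N (L u) \<le> 2 * c \<and> N (\<lambda>z. v z - u z) < \<epsilon>"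
proof -
  have near: "\<exists>a\<in>X. N (L a) \<le> c \<and> N (\<lambda>z. w z - a z) < \<epsilon> / 2" if "w \<in> M.mball f0 r" for w
  proof -
    have "w \<in> M.mtopology closure_of {f \<in> X. N (L f) \<le> c}"
      using ball that by blast
    then have "\<forall>\<rho>>0. \<exists>a\<in>{f \<in> X. N (L f) \<le> c}. a \<in> M.mball w \<rho>"
      unfolding M.metric_closure_of by blast
    then obtain a where "a \<in> X" "N (L a) \<le> c" "a \<in> M.mball w (\<epsilon> / 2)"
      using \<open>\<epsilon> > 0\<close> half_gt_zero by blast
    then show ?thesis
      using that by auto
  qed
  have "(\<lambda>z. f0 z + v z) \<in> M.mball f0 r"
    using \<open>f0 \<in> X\<close> v N_minus[OF v(1)] by (auto simp: add_in)
  then obtain a1 where a1: "a1 \<in> X" "N (L a1) \<le> c" "N (\<lambda>z. f0 z + v z - a1 z) < \<epsilon> / 2"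
    using near by blast
  have "f0 \<in> M.mball f0 r"
    using \<open>f0 \<in> X\<close> v(2) N_nonneg[OF v(1)] by (simp del: N_nonneg)
  then obtain a2 where a2: "a2 \<in> X" "N (L a2) \<le> c" "N (\<lambda>z. f0 z - a2 z) < \<epsilon> / 2"
    using near by blast
  have "N (L (\<lambda>z. a1 z - a2 z)) \<le> N (L a1) + N (L a2)"
    using linear_op_diff[OF L a1(1) a2(1)] N_diff_le linear_op_in[OF L] a1(1) a2(1) by simp
  moreover have "(\<lambda>z. v z - (a1 z - a2 z)) = (\<lambda>z. (f0 z + v z - a1 z) - (f0 z - a2 z))"
    by (simp add: algebra_simps)
  then have "N (\<lambda>z. v z - (a1 z - a2 z)) \<le> N (\<lambda>z. f0 z + v z - a1 z) + N (\<lambda>z. f0 z - a2 z)"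
    using N_diff_le[of "\<lambda>z. f0 z + v z - a1 z" "\<lambda>z. f0 z - a2 z"] \<open>f0 \<in> X\<close> v(1) a1(1) a2(1)
    by (simp add: add_in diff_in)
  ultimately show ?thesis
    using a1 a2 by (intro bexI[of _ "\<lambda>z. a1 z - a2 z"]) auto
qed

lemma approximate_preimage_scaled:
  assumes L: "linear_op L" and "r > 0"
    and near: "\<And>v \<epsilon>. v \<in> X \<Longrightarrow> N v < r \<Longrightarrow> \<epsilon> > 0 \<Longrightarrow>
      \<exists>u\<in>X. N (L u) \<le> c \<and> N (\<lambda>z. v z - u z) < \<epsilon>"
    and v: "v \<in> X" "N v > 0" and "\<epsilon> > 0"
  shows "\<exists>u\<in>X. N (L u) \<le> 2 * c / r * N v \<and> N (\<lambda>z. v z - u z) < \<epsilon>"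
proof -
  define t \<tau> where "t = r / (2 * N v)" and "\<tau> = 2 * N v / r"
  have "t > 0" "\<tau> > 0" "\<tau> * t = 1"
    using \<open>r > 0\<close> \<open>N v > 0\<close> by (simp_all add: t_def \<tau>_def)
  have "N (\<lambda>z. of_real t * v z) < r"
    using N_scale_real[OF v(1), of t] \<open>t > 0\<close> \<open>N v > 0\<close> \<open>r > 0\<close> by (simp add: t_def)
  then obtain u where u: "u \<in> X" "N (L u) \<le> c" "N (\<lambda>z. of_real t * v z - u z) < t * \<epsilon>"
    using near[of "\<lambda>z. of_real t * v z" "t * \<epsilon>"] v \<open>t > 0\<close> \<open>\<epsilon> > 0\<close> by auto
  have "N (L (\<lambda>z. of_real \<tau> * u z)) = \<tau> * N (L u)"
    using linear_op_scale[OF L u(1)] N_scale_real[OF linear_op_in[OF L u(1)]] \<open>\<tau> > 0\<close> by simp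
  also have "\<dots> \<le> \<tau> * c"
    using u(2) \<open>\<tau> > 0\<close> by simp
  also have "\<dots> = 2 * c / r * N v"
    by (simp add: \<tau>_def)
  finally have bound: "N (L (\<lambda>z. of_real \<tau> * u z)) \<le> 2 * c / r * N v" .
  have "(\<lambda>z. v z - of_real \<tau> * u z) = (\<lambda>z. of_real \<tau> * (of_real t * v z - u z))"
    using \<open>\<tau> * t = 1\<close> by (auto simp: fun_eq_iff algebra_simps of_real_mult[symmetric])
  then have "N (\<lambda>z. v z - of_real \<tau> * u z) = \<tau> * N (\<lambda>z. of_real t * v z - u z)"
    using N_scale_real[of "\<lambda>z. of_real t * v z - u z" \<tau>] v(1) u(1) \<open>\<tau> > 0\<close>
    by (simp add: diff_in scale_in)
  also have "\<dots> < \<tau> * (t * \<epsilon>)"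
    using u(3) \<open>\<tau> > 0\<close> by simp
  finally have "N (\<lambda>z. v z - of_real \<tau> * u z) < \<epsilon>"
    using \<open>\<tau> * t = 1\<close> by (simp add: mult.assoc[symmetric])
  with bound show ?thesis
    using u(1) by blast
qed

lemma approximate_preimage:
  assumes L: "linear_op L"
  obtains K where "K \<ge> 0"
    "\<And>v (\<epsilon> :: real). v \<in> X \<Longrightarrow> \<epsilon> > 0 \<Longrightarrow> \<exists>u\<in>X. N (L u) \<le> K * N v \<and> N (\<lambda>z. v z - u z) < \<epsilon>"
proof -
  obtain n :: nat and f0 r where "f0 \<in> X" "r > 0"
    and ball: "M.mball f0 r \<subseteq> M.mtopology closure_of {f \<in> X. N (L f) \<le> real n}"
    by (rule sublevel_closure_contains_ball)
  note near = approximate_preimage_in_ball[OF L \<open>f0 \<in> X\<close> ball]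
  show thesis
  proof (rule that)
    show "2 * (2 * real n) / r \<ge> 0"
      using \<open>r > 0\<close> by simp
    fix v and \<epsilon> :: real assume v: "v \<in> X" and "\<epsilon> > 0"
    show "\<exists>u\<in>X. N (L u) \<le> 2 * (2 * real n) / r * N v \<and> N (\<lambda>z. v z - u z) < \<epsilon>"
    proof (cases "N v = 0")
      case True
      then have "v = (\<lambda>z. 0)"
        using N_eq_0_iff v by blast
      then show ?thesis
        using \<open>\<epsilon> > 0\<close> linear_op_zero[OF L] by (intro bexI[of _ "\<lambda>z. 0"]) auto
    next
      case False
      then have "N v > 0"
        using N_nonneg[OF v] by linarith
      then show ?thesis
        using approximate_preimage_scaled[OF L \<open>r > 0\<close> near v] \<open>\<epsilon> > 0\<close> by blast
    qed
  qed
qed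

lemma approximation_remainders:
  assumes L: "linear_op L" and "K \<ge> 0"
    and approx: "\<And>v \<epsilon>. v \<in> X \<Longrightarrow> \<epsilon> > 0 \<Longrightarrow>
      \<exists>u\<in>X. N (L u) \<le> K * N v \<and> N (\<lambda>z. v z - u z) < \<epsilon>"
    and v: "v \<in> X" "N v > 0"
  obtains r where "r 0 = v" "\<And>k. r k \<in> X" "\<And>k. N (r k) \<le> N v * (1 / 2) ^ k"
    "\<And>k. N (\<lambda>z. L (r (Suc k)) z - L (r k) z) \<le> K * N v * (1 / 2) ^ k"
proof -
  obtain u where u: "\<And>v \<epsilon>. v \<in> X \<Longrightarrow> \<epsilon> > 0 \<Longrightarrow>
      u v \<epsilon> \<in> X \<and> N (L (u v \<epsilon>)) \<le> K * N v \<and> N (\<lambda>z. v z - u v \<epsilon> z) < \<epsilon>"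
    using approx by metis
  define \<epsilon> where "\<epsilon> k = N v * (1 / 2) ^ Suc k" for k :: nat
  define r where "r = rec_nat v (\<lambda>k r. (\<lambda>z. r z - u r (\<epsilon> k) z))"
  have r_Suc: "r (Suc k) = (\<lambda>z. r k z - u (r k) (\<epsilon> k) z)" for k
    by (simp add: r_def)
  have r: "r k \<in> X \<and> N (r k) \<le> N v * (1 / 2) ^ k" for k
  proof (induction k)
    case (Suc k)
    then show ?case
      using u[of "r k" "\<epsilon> k"] \<open>N v > 0\<close> by (auto simp: r_Suc \<epsilon>_def)
  qed (simp add: r_def v)
  have step: "N (\<lambda>z. L (r (Suc k)) z - L (r k) z) \<le> K * N v * (1 / 2) ^ k" for k
  proof -
    have u_k: "u (r k) (\<epsilon> k) \<in> X" "N (L (u (r k) (\<epsilon> k))) \<le> K * N (r k)"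
      using u[of "r k" "\<epsilon> k"] r \<open>N v > 0\<close> by (auto simp: \<epsilon>_def)
    have "(\<lambda>z. L (r (Suc k)) z - L (r k) z) = (\<lambda>z. - L (u (r k) (\<epsilon> k)) z)"
      using linear_op_diff[OF L, of "r k" "u (r k) (\<epsilon> k)"] r u_k(1) by (simp add: r_Suc)
    then have "N (\<lambda>z. L (r (Suc k)) z - L (r k) z) = N (L (u (r k) (\<epsilon> k)))"
      using N_minus linear_op_in[OF L u_k(1)] by simp
    also have "\<dots> \<le> K * (N v * (1 / 2) ^ k)"
      using u_k(2) r[of k] \<open>K \<ge> 0\<close> by (meson mult_left_mono order_trans)
    finally show ?thesis
      by (simp add: mult.assoc)
  qed
  moreover have "r 0 = v"
    by (simp add: r_def)
  ultimately show thesis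
    using that r by blast
qed

(* v - r k is a sum of approximants whose images under L form a geometric series; the closed
   graph forces the limit of L (r k) to be 0, so L v is the sum of that series. *)
theorem closed_graph:
  assumes L: "linear_op L"
    and closed: "\<And>s w. (\<And>n. s n \<in> X) \<Longrightarrow> w \<in> X \<Longrightarrow> (\<lambda>n. N (s n)) \<longlonglongrightarrow> 0 \<Longrightarrow>
      (\<lambda>n. N (\<lambda>z. L (s n) z - w z)) \<longlonglongrightarrow> 0 \<Longrightarrow> w = (\<lambda>z. 0)"
  shows "\<exists>C. \<forall>f\<in>X. N (L f) \<le> C * N f"
proof -
  obtain K where "K \<ge> 0" and approx: "\<And>v \<epsilon>. v \<in> X \<Longrightarrow> \<epsilon> > 0 \<Longrightarrow>
      \<exists>u\<in>X. N (L u) \<le> K * N v \<and> N (\<lambda>z. v z - u z) < \<epsilon>"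
    using approximate_preimage[OF L] by blast
  have "N (L v) \<le> 2 * K * N v" if v: "v \<in> X" for v
  proof (cases "N v = 0")
    case True
    then show ?thesis
      using N_eq_0_iff v linear_op_zero[OF L] by simp
  next
    case False
    then have "N v > 0"
      using N_nonneg[OF v] by linarith
    then obtain r where r: "r 0 = v" "\<And>k. r k \<in> X" "\<And>k. N (r k) \<le> N v * (1 / 2) ^ k"
      and step: "\<And>k. N (\<lambda>z. L (r (Suc k)) z - L (r k) z) \<le> K * N v * (1 / 2) ^ k"
      using approximation_remainders[OF L \<open>K \<ge> 0\<close> approx v] by blast
    obtain w where w: "w \<in> X" "(\<lambda>k. N (\<lambda>z. L (r k) z - w z)) \<longlonglongrightarrow> 0"
      and bound: "N (\<lambda>z. L (r 0) z - w z) \<le> K * N v / (1 - 1 / 2)"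
      by (rule geometric_Cauchy_limit[of "\<lambda>k. L (r k)" "1 / 2" "K * N v", OF _ _ _ step])
        (use linear_op_in[OF L] r(2) in auto)
    have "(\<lambda>k. N (r k)) \<longlonglongrightarrow> 0"
    proof (rule tendsto_sandwich[of "\<lambda>_. 0" _ _ "\<lambda>k. N v * (1 / 2) ^ k"])
      show "(\<lambda>k. N v * (1 / 2) ^ k) \<longlonglongrightarrow> 0"
        using tendsto_mult_right_zero[OF LIMSEQ_power_zero[of "1 / 2 :: real"]] by simp
    qed (use r in auto)
    then have "w = (\<lambda>z. 0)"
      using closed[of r w] r(2) w by blast
    then show ?thesis
      using bound r(1) by simp
  qed
  then show ?thesis by blast
qed

lemma linear_op_inv_into:
  assumes A: "linear_op A" and bij: "bij_betw A X X"
  shows "linear_op (inv_into X A)"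
proof -
  let ?U = "inv_into X A"
  have U_in: "?U g \<in> X" if "g \<in> X" for g
    using bij that by (metis bij_betw_imp_surj_on inv_into_into)
  have AU: "A (?U g) = g" if "g \<in> X" for g
    using bij that by (simp add: bij_betw_inv_into_right)
  have UA: "?U (A f) = f" if "f \<in> X" for f
    using bij that by (simp add: bij_betw_inv_into_left)
  show ?thesis
    unfolding linear_op_def
  proof (intro conjI ballI allI)
    fix f g assume "f \<in> X" "g \<in> X"
    then have "A (\<lambda>z. ?U f z + ?U g z) = (\<lambda>z. f z + g z)"
      using linear_op_add[OF A U_in U_in] AU by simp
    then show "?U (\<lambda>z. f z + g z) = (\<lambda>z. ?U f z + ?U g z)"
      using UA[of "\<lambda>z. ?U f z + ?U g z"] U_in \<open>f \<in> X\<close> \<open>g \<in> X\<close> by (simp add: add_in)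
  next
    fix f c assume "f \<in> X"
    then have "A (\<lambda>z. c * ?U f z) = (\<lambda>z. c * f z)"
      using linear_op_scale[OF A U_in] AU by simp
    then show "?U (\<lambda>z. c * f z) = (\<lambda>z. c * ?U f z)"
      using UA[of "\<lambda>z. c * ?U f z"] U_in \<open>f \<in> X\<close> by (simp add: scale_in)
  qed (rule U_in)
qed

theorem bounded_inverse:
  assumes A: "bounded_op X N A" and bij: "bij_betw A X X"
  shows "bounded_op X N (inv_into X A)"
proof -
  let ?U = "inv_into X A"
  have lin: "linear_op A"
    using A bounded_op_iff by blast
  obtain C where C: "\<And>f. f \<in> X \<Longrightarrow> N (A f) \<le> C * N f"
    using A bounded_op_iff by blast
  have U_lin: "linear_op ?U"
    by (rule linear_op_inv_into[OF lin bij])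
  have "\<exists>C. \<forall>g\<in>X. N (?U g) \<le> C * N g"
  proof (rule closed_graph[OF U_lin])
    fix s w assume s: "\<And>n. s n \<in> X" and "w \<in> X" and s_lim: "(\<lambda>n. N (s n)) \<longlonglongrightarrow> 0"
      and Us_lim: "(\<lambda>n. N (\<lambda>z. ?U (s n) z - w z)) \<longlonglongrightarrow> 0"
    have "N (A w) \<le> N (s n) + C * N (\<lambda>z. ?U (s n) z - w z)" for n
    proof -
      have Us: "?U (s n) \<in> X"
        using linear_op_in[OF U_lin s] .
      have "A (\<lambda>z. ?U (s n) z - w z) = (\<lambda>z. s n z - A w z)"
        using linear_op_diff[OF lin Us \<open>w \<in> X\<close>] bij_betw_inv_into_right[OF bij s] by simp
      moreover have "A w = (\<lambda>z. s n z - (s n z - A w z))"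
        by simp
      ultimately have "N (A w) \<le> N (s n) + N (A (\<lambda>z. ?U (s n) z - w z))"
        using N_diff_le[of "s n" "\<lambda>z. s n z - A w z"] s linear_op_in[OF lin \<open>w \<in> X\<close>]
        by (simp add: diff_in)
      then show ?thesis
        using C[of "\<lambda>z. ?U (s n) z - w z"] Us \<open>w \<in> X\<close> by (simp add: diff_in)
    qed
    moreover have "(\<lambda>n. N (s n) + C * N (\<lambda>z. ?U (s n) z - w z)) \<longlonglongrightarrow> 0 + C * 0"
      by (intro tendsto_intros s_lim Us_lim)
    ultimately have "N (A w) \<le> 0"
      by (intro LIMSEQ_le_const) auto
    then have "A w = (\<lambda>z. 0)"
      using N_eq_0_iff N_nonneg linear_op_in[OF lin \<open>w \<in> X\<close>] by (meson order_antisym)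
    then show "w = (\<lambda>z. 0)"
      using bij_betw_inv_into_left[OF bij \<open>w \<in> X\<close>] linear_op_zero[OF U_lin] by simp
  qed
  with U_lin show ?thesis
    using bounded_op_iff by blast
qed

lemma bounded_op_lambda_minus_op:
  assumes "bounded_op X N T"
  shows "bounded_op X N (lambda_minus_op l T)"
proof -
  have T: "linear_op T"
    using assms bounded_op_iff by blast
  obtain C where C: "\<forall>f\<in>X. N (T f) \<le> C * N f"
    using assms bounded_op_iff by blast
  have "linear_op (lambda_minus_op l T)"
    unfolding linear_op_def lambda_minus_op_def
    using linear_op_in[OF T] linear_op_add[OF T] linear_op_scale[OF T]
    by (auto simp: algebra_simps)
  moreover have "N (lambda_minus_op l T f) \<le> (cmod l + C) * N f" if "f \<in> X" for f
  proof -
    have "N (lambda_minus_op l T f) \<le> N (\<lambda>z. l * f z) + N (T f)"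
      unfolding lambda_minus_op_def using N_diff_le linear_op_in[OF T] that by blast
    also have "\<dots> \<le> (cmod l + C) * N f"
      using N_scale C that by (simp add: algebra_simps)
    finally show ?thesis .
  qed
  ultimately show ?thesis
    using bounded_op_iff by blast
qed

lemma notin_op_spectrum_if_bij:
  assumes "bounded_op X N T" and bij: "bij_betw (lambda_minus_op l T) X X"
  shows "l \<notin> op_spectrum X N T"
  unfolding notin_op_spectrum_iff
proof (intro exI conjI ballI)
  show "bounded_op X N (inv_into X (lambda_minus_op l T))"
    by (rule bounded_inverse[OF bounded_op_lambda_minus_op[OF assms(1)] bij])
  show "inv_into X (lambda_minus_op l T) (lambda_minus_op l T f) = f" if "f \<in> X" for f
    using bij that by (rule bij_betw_inv_into_left)
  show "lambda_minus_op l T (inv_into X (lambda_minus_op l T) f) = f" if "f \<in> X" for f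
    using bij that by (rule bij_betw_inv_into_right)
qed

lemma contraction_fixpoint:
  assumes "\<And>h. h \<in> X \<Longrightarrow> \<Phi> h \<in> X"
    and "\<And>h1 h2. h1 \<in> X \<Longrightarrow> h2 \<in> X \<Longrightarrow>
      N (\<lambda>z. \<Phi> h1 z - \<Phi> h2 z) \<le> 1 / 2 * N (\<lambda>z. h1 z - h2 z)"
  obtains h where "h \<in> X" "\<Phi> h = h"
proof (rule M.Banach_fixedpoint_thm[where k = "1 / 2", OF mcomplete_dist_N])
  show "\<Phi> \<in> X \<rightarrow> X"
    using assms(1) by blast
  show "dist_N (\<Phi> h1) (\<Phi> h2) \<le> 1 / 2 * dist_N h1 h2" if "h1 \<in> X" "h2 \<in> X" for h1 h2
    using assms that by simp
qed (use that in auto)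

lemma small_multiple_contraction:
  assumes R: "linear_op R" and RC: "\<And>f. f \<in> X \<Longrightarrow> N (R f) \<le> C * N f"
    and small: "cmod a * C \<le> 1 / 2" and "h \<in> X"
  shows "N (R (\<lambda>z. a * h z)) \<le> 1 / 2 * N h"
proof -
  have "N (R (\<lambda>z. a * h z)) = cmod a * N (R h)"
    using linear_op_scale[OF R \<open>h \<in> X\<close>] N_scale[OF linear_op_in[OF R \<open>h \<in> X\<close>]] by simp
  also have "\<dots> \<le> (cmod a * C) * N h"
    using RC[OF \<open>h \<in> X\<close>] by (simp add: mult.assoc mult_left_mono)
  also have "\<dots> \<le> 1 / 2 * N h"
    using small N_nonneg[OF \<open>h \<in> X\<close>] by (intro mult_right_mono) auto
  finally show ?thesis .
qed

(* Neumann series: (nu' - T) h = g is the fixed point equation h = R (g + (nu - nu') h). *)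
lemma lambda_minus_op_perturbation_bij:
  assumes T: "bounded_op X N T" and R: "linear_op R"
    and RA: "\<And>f. f \<in> X \<Longrightarrow> R (lambda_minus_op \<nu> T f) = f"
    and AR: "\<And>f. f \<in> X \<Longrightarrow> lambda_minus_op \<nu> T (R f) = f"
    and RC: "\<And>f. f \<in> X \<Longrightarrow> N (R f) \<le> C * N f"
    and small: "cmod (\<nu> - \<nu>') * C \<le> 1 / 2"
  shows "bij_betw (lambda_minus_op \<nu>' T) X X"
proof -
  define a where "a = \<nu> - \<nu>'"
  have shift: "lambda_minus_op \<nu> T h = (\<lambda>z. lambda_minus_op \<nu>' T h z + a * h z)" for h
    by (simp add: lambda_minus_op_def a_def fun_eq_iff algebra_simps)
  have contract: "N (R (\<lambda>z. a * h z)) \<le> 1 / 2 * N h" if "h \<in> X" for h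
    using small_multiple_contraction[OF R RC _ that] small by (simp add: a_def)
  show ?thesis
  proof (rule linear_op_bij_betwI)
    show "linear_op (lambda_minus_op \<nu>' T)"
      using bounded_op_lambda_minus_op[OF T] bounded_op_iff by blast
  next
    fix h assume "h \<in> X" and "lambda_minus_op \<nu>' T h = (\<lambda>z. 0)"
    then have "h = R (\<lambda>z. a * h z)"
      using RA[OF \<open>h \<in> X\<close>] shift[of h] by simp
    then have "N h \<le> 1 / 2 * N h"
      using contract[OF \<open>h \<in> X\<close>] by simp
    then have "N h = 0"
      using N_nonneg[OF \<open>h \<in> X\<close>] by linarith
    then show "h = (\<lambda>z. 0)"
      using N_eq_0_iff \<open>h \<in> X\<close> by blast
  next
    fix g assume "g \<in> X"
    define \<Phi> where "\<Phi> h = R (\<lambda>z. g z + a * h z)" for h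
    have \<Phi>_in: "\<Phi> h \<in> X" if "h \<in> X" for h
      unfolding \<Phi>_def using that by (intro linear_op_in[OF R] add_in scale_in \<open>g \<in> X\<close>)
    have "N (\<lambda>z. \<Phi> h1 z - \<Phi> h2 z) \<le> 1 / 2 * N (\<lambda>z. h1 z - h2 z)" if "h1 \<in> X" "h2 \<in> X" for h1 h2
    proof -
      have "(\<lambda>z. \<Phi> h1 z - \<Phi> h2 z) = R (\<lambda>z. a * (h1 z - h2 z))"
        unfolding \<Phi>_def using linear_op_diff[OF R, of "\<lambda>z. g z + a * h1 z" "\<lambda>z. g z + a * h2 z"]
          \<open>g \<in> X\<close> that by (simp add: add_in scale_in algebra_simps)
      then show ?thesis
        using contract[of "\<lambda>z. h1 z - h2 z"] that by (simp add: diff_in)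
    qed
    then obtain h where "h \<in> X" "\<Phi> h = h"
      using contraction_fixpoint[of \<Phi>, OF \<Phi>_in] by blast
    then have "lambda_minus_op \<nu> T h = (\<lambda>z. g z + a * h z)"
      using AR[of "\<lambda>z. g z + a * h z"] \<open>g \<in> X\<close> by (simp add: \<Phi>_def add_in scale_in)
    then show "\<exists>h\<in>X. lambda_minus_op \<nu>' T h = g"
      using \<open>h \<in> X\<close> shift[of h] by (auto simp: fun_eq_iff)
  qed
qed

lemma closed_op_spectrum:
  assumes T: "bounded_op X N T"
  shows "closed (op_spectrum X N T)"
  unfolding closed_def open_dist
proof
  fix \<nu> assume "\<nu> \<in> - op_spectrum X N T"
  then have "\<nu> \<notin> op_spectrum X N T"
    by simp
  then obtain R where R: "bounded_op X N R" "\<forall>f\<in>X. R (lambda_minus_op \<nu> T f) = f"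
    "\<forall>f\<in>X. lambda_minus_op \<nu> T (R f) = f"
    unfolding notin_op_spectrum_iff by blast
  obtain C where "C > 0" and RC: "\<And>f. f \<in> X \<Longrightarrow> N (R f) \<le> C * N f"
    using bounded_op_pos_bound[OF R(1)] by blast
  have "\<nu>' \<notin> op_spectrum X N T" if "dist \<nu>' \<nu> < 1 / (2 * C)" for \<nu>'
  proof (rule notin_op_spectrum_if_bij[OF T lambda_minus_op_perturbation_bij[OF T _ _ _ RC]])
    show "linear_op R"
      using R(1) bounded_op_iff by blast
    show "cmod (\<nu> - \<nu>') * C \<le> 1 / 2"
      using that \<open>C > 0\<close> by (simp add: dist_norm norm_minus_commute field_simps)
  qed (use R in auto)
  then show "\<exists>e>0. \<forall>\<nu>'. dist \<nu>' \<nu> < e \<longrightarrow> \<nu>' \<in> - op_spectrum X N T"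
    using \<open>C > 0\<close> by (intro exI[of _ "1 / (2 * C)"]) auto
qed

end

section \<open>The weighted rotation operator\<close>

locale weighted_rotation_operator = banach_function_space +
  fixes m :: "complex \<Rightarrow> complex" and \<beta> :: complex
    and T :: "(complex \<Rightarrow> complex) \<Rightarrow> (complex \<Rightarrow> complex)"
  assumes X_subset_Hol_D: "X \<subseteq> Hol_D"
    and e0_in: "e0 \<in> X"
    and X_z_factor: "\<forall>f\<in>Hol_D. \<forall>f1\<in>Hol_D. (\<forall>z. f z = z * f1 z) \<longrightarrow> (f \<in> X \<longleftrightarrow> f1 \<in> X)"
    and \<beta>_nonzero: "\<beta> \<noteq> 0"
    and T_eq: "\<forall>f. T f = (\<lambda>z. m z * f (\<beta> * z))"
    and T_bounded: "bounded_op X N T"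
begin

lemma in_Hol_D: "f \<in> X \<Longrightarrow> f \<in> Hol_D"
  using X_subset_Hol_D by blast

lemma m0_in_op_spectrum: "m 0 \<in> op_spectrum X N T"
proof (rule ccontr)
  assume "m 0 \<notin> op_spectrum X N T"
  then obtain S where "\<forall>f\<in>X. lambda_minus_op (m 0) T (S f) = f"
    unfolding notin_op_spectrum_iff by blast
  then have "lambda_minus_op (m 0) T (S e0) 0 = e0 0"
    using e0_in by simp
  then show False
    using T_eq by (simp add: lambda_minus_op_def e0_def)
qed

lemma mult_z_in_iff:
  assumes "h \<in> Hol_D"
  shows "(\<lambda>z. z * h z) \<in> X \<longleftrightarrow> h \<in> X"
  using X_z_factor[rule_format, OF Hol_D_mult_z[OF assms] assms] by simp

lemma lambda_minus_op_mult_z: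
  "lambda_minus_op (\<beta> * l) T (\<lambda>z. z * h z) = (\<lambda>z. \<beta> * z * lambda_minus_op l T h z)"
  using T_eq by (simp add: lambda_minus_op_def fun_eq_iff algebra_simps)

lemma lambda_minus_op_kernel_trivial:
  assumes "\<beta> * l \<notin> op_spectrum X N T" and "h \<in> X" and "lambda_minus_op l T h = (\<lambda>z. 0)"
  shows "h = (\<lambda>z. 0)"
proof -
  obtain R where R: "bounded_op X N R" and RA: "\<And>f. f \<in> X \<Longrightarrow> R (lambda_minus_op (\<beta> * l) T f) = f"
    using assms(1) unfolding notin_op_spectrum_iff by blast
  have Azh: "lambda_minus_op (\<beta> * l) T (\<lambda>z. z * h z) = (\<lambda>z. 0)"
    using lambda_minus_op_mult_z[of l h] assms(3) by simp
  have "(\<lambda>z. z * h z) \<in> X"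
    using mult_z_in_iff[OF in_Hol_D] \<open>h \<in> X\<close> by simp
  from RA[OF this] have "(\<lambda>z. z * h z) = R (\<lambda>z. 0)"
    unfolding Azh by simp
  also have "\<dots> = (\<lambda>z. 0)"
    using R linear_op_zero unfolding bounded_op_iff by blast
  finally have "\<And>z. z * h z = z * 0"
    by (simp add: fun_eq_iff)
  then show "h = (\<lambda>z. 0)"
    by (rule Hol_D_mult_z_cancel[OF in_Hol_D[OF \<open>h \<in> X\<close>] in_Hol_D[OF zero_in]])
qed

lemma lambda_minus_op_onto:
  assumes "\<beta> * l \<notin> op_spectrum X N T" and "\<beta> * l \<noteq> m 0" and "g \<in> X"
  shows "\<exists>h\<in>X. lambda_minus_op l T h = g"
proof -
  obtain R where R: "bounded_op X N R" and AR: "\<And>f. f \<in> X \<Longrightarrow> lambda_minus_op (\<beta> * l) T (R f) = f"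
    using assms(1) unfolding notin_op_spectrum_iff by blast
  have R_in: "\<And>f. f \<in> X \<Longrightarrow> R f \<in> X"
    using R linear_op_in unfolding bounded_op_iff by blast
  define y where "y = R (\<lambda>z. \<beta> * (z * g z))"
  have "(\<lambda>z. z * g z) \<in> X"
    using mult_z_in_iff[OF in_Hol_D] \<open>g \<in> X\<close> by simp
  then have "(\<lambda>z. \<beta> * (z * g z)) \<in> X"
    by (rule scale_in)
  then have "y \<in> X" and Ay: "lambda_minus_op (\<beta> * l) T y = (\<lambda>z. \<beta> * (z * g z))"
    unfolding y_def by (rule R_in, rule AR)
  have "(\<beta> * l - m 0) * y 0 = 0"
    using fun_cong[OF Ay, of 0] T_eq by (simp add: lambda_minus_op_def algebra_simps)
  then have "y 0 = 0"
    using assms(2) by simp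
  then obtain h where "h \<in> Hol_D" and y: "\<And>z. y z = z * h z"
    using Hol_D_factor_z[OF in_Hol_D[OF \<open>y \<in> X\<close>]] by blast
  then have y_eq: "y = (\<lambda>z. z * h z)"
    by (simp add: fun_eq_iff)
  then have "h \<in> X"
    using mult_z_in_iff[OF \<open>h \<in> Hol_D\<close>] \<open>y \<in> X\<close> by simp
  have "\<beta> * (z * lambda_minus_op l T h z) = \<beta> * (z * g z)" for z
    using fun_cong[OF Ay[unfolded y_eq lambda_minus_op_mult_z], of z] by (simp add: mult.assoc)
  then have "z * lambda_minus_op l T h z = z * g z" for z
    using \<beta>_nonzero by simp
  moreover have "lambda_minus_op l T h \<in> X"
    using bounded_op_lambda_minus_op[OF T_bounded] \<open>h \<in> X\<close> unfolding bounded_op_def by blast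
  ultimately have "lambda_minus_op l T h = g"
    using Hol_D_mult_z_cancel[OF in_Hol_D in_Hol_D[OF \<open>g \<in> X\<close>]] by blast
  with \<open>h \<in> X\<close> show ?thesis
    by blast
qed

lemma op_spectrum_mult_beta:
  assumes "l \<in> op_spectrum X N T"
  shows "\<beta> * l \<in> op_spectrum X N T"
proof (rule ccontr)
  assume "\<beta> * l \<notin> op_spectrum X N T"
  moreover have "linear_op (lambda_minus_op l T)"
    using bounded_op_lambda_minus_op[OF T_bounded] bounded_op_iff by blast
  ultimately have "bij_betw (lambda_minus_op l T) X X"
    using lambda_minus_op_kernel_trivial lambda_minus_op_onto m0_in_op_spectrum
    by (metis linear_op_bij_betwI)
  then show False
    using notin_op_spectrum_if_bij[OF T_bounded] assms by blast
qed

end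

theorem proposition5p2:
  fixes X :: "(complex \<Rightarrow> complex) set" and N :: "(complex \<Rightarrow> complex) \<Rightarrow> real"
    and m :: "complex \<Rightarrow> complex" and \<beta> :: complex
    and T :: "(complex \<Rightarrow> complex) \<Rightarrow> (complex \<Rightarrow> complex)"
  assumes X: "banach_subspace_Hol X N"
    and i: "e0 \<in> X"
    and ii: "\<forall>f\<in>Hol_D. \<forall>f1\<in>Hol_D. (\<forall>z. f z = z * f1 z) \<longrightarrow> (f \<in> X \<longleftrightarrow> f1 \<in> X)"
    and iii: "\<forall>f\<in>X. \<forall>\<beta>'. cmod \<beta>' = 1 \<longrightarrow> (\<lambda>z. f (\<beta>' * z)) \<in> X"
    and m: "m holomorphic_on ball 0 1"
    and mX: "\<forall>f\<in>X. (\<lambda>z. m z * f z) \<in> X"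
    and \<beta>: "cmod \<beta> = 1" "\<forall>n::nat. n \<ge> 1 \<longrightarrow> \<beta> ^ n \<noteq> 1"
    and T_def: "\<forall>f. T f = (\<lambda>z. m z * f (\<beta> * z))"
    and T_bdd: "bounded_op X N T"
  shows "(\<forall>\<mu>. cmod \<mu> = 1 \<longrightarrow> m 0 * \<mu> \<in> op_spectrum X N T) \<and>
         (\<forall>l\<in>op_spectrum X N T. \<forall>\<mu>. cmod \<mu> = 1 \<longrightarrow> l * \<mu> \<in> op_spectrum X N T)"
proof -
  interpret weighted_rotation_operator X N m \<beta> T
  proof (intro_locales)
    show "banach_function_space X N"
      by (rule banach_function_space_if_banach_subspace_Hol[OF X])
    have "X \<subseteq> Hol_D"
      using X unfolding banach_subspace_Hol_def by (rule conjunct1)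
    then show "weighted_rotation_operator_axioms X N m \<beta> T"
      using i ii \<beta>(1) T_def T_bdd by unfold_locales auto
  qed
  have rotation: "l * \<mu> \<in> op_spectrum X N T" if "l \<in> op_spectrum X N T" "cmod \<mu> = 1" for l \<mu>
    by (rule closed_rotation_invariant[OF closed_op_spectrum[OF T_bdd] \<beta> op_spectrum_mult_beta that])
  show ?thesis
    using rotation m0_in_op_spectrum by blast
qed

end
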